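(* Let $t$ be a positive integer and $i\in\{1,\ldots,t\}$. Then there exist a positive integer $k$ and matrices $A,M,N,B\in\mathbb{Z}^{k\times k}_{\rm uptr}$ such that \[AM^{a_1}NM^{a_2}N\cdots NM^{a_t}B=a_iE_k\] for all nonnegative integers $a_1,\ldots,a_t$ (the product contains $t-1$ factors $N$).
   Context: $\mathbb{Z}^{k\times k}_{\rm uptr}$ is the set of upper-triangular $k\times k$ integer matrices. $E_k$ denotes the $k\times k$ matrix whose only nonzero entry is the entry in row $1$, column $k$, equal to $1$. *)

theory Defs
  imports "Jordan_Normal_Form.Matrix"
begin

definition E_mat :: "nat \<Rightarrow> int mat" where
  "E_mat k = mat k k (\<lambda>(r, c). if r = 0 \<and> c = k - 1 then 1 else 0)"

fun word_MN :: "int mat \<Rightarrow> int mat \<Rightarrow> nat list \<Rightarrow> int mat" where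
  "word_MN M N [] = 1\<^sub>m (dim_row M)"
| "word_MN M N [a] = M ^\<^sub>m a"
| "word_MN M N (a # as) = M ^\<^sub>m a * N * word_MN M N as"

end

theory Submission
  imports Defs
begin

text \<open>
  Take k = t + 1, p = i - 1, M = 1 + e(p, p+1), and N the superdiagonal shift with its entry in
  row p removed. Then M^a N has ones on the superdiagonal except in row p, whose only entry is a
  in column p + 2, and M^a = 1 + a e(p, p+1). Following row 0 through the word, each of the
  t - 1 factors M^a N moves one row down, except the one met in row p, which skips a row and
  contributes its exponent; the final factor M^a moves down (contributing a) only from row p.
  So the last column is reached along a single path, of weight a_i. Sandwiching between the
  projections onto the first and the last coordinate isolates this corner entry.
\<close>

lemma index_mult_mat_row_support:
  assumes "X \<in> carrier_mat n m" "Y \<in> carrier_mat m l" "r < n" "c < l" "S \<subseteq> {..<m}"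
    and "\<And>d. d < m \<Longrightarrow> d \<notin> S \<Longrightarrow> X $$ (r, d) = 0"
  shows "(X * Y) $$ (r, c) = (\<Sum>d\<in>S. X $$ (r, d) * Y $$ (d, c))"
proof -
  have "(X * Y) $$ (r, c) = (\<Sum>d<m. X $$ (r, d) * Y $$ (d, c))"
    using assms by (simp add: scalar_prod_def lessThan_atLeast0)
  also have "\<dots> = (\<Sum>d\<in>S. X $$ (r, d) * Y $$ (d, c))"
    by (rule sum.mono_neutral_right) (use assms in auto)
  finally show ?thesis .
qed

lemma index_mult_mat_col_support:
  assumes "X \<in> carrier_mat n m" "Y \<in> carrier_mat m l" "r < n" "c < l" "S \<subseteq> {..<m}"
    and "\<And>d. d < m \<Longrightarrow> d \<notin> S \<Longrightarrow> Y $$ (d, c) = 0"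
  shows "(X * Y) $$ (r, c) = (\<Sum>d\<in>S. X $$ (r, d) * Y $$ (d, c))"
proof -
  have "(X * Y) $$ (r, c) = (\<Sum>d<m. X $$ (r, d) * Y $$ (d, c))"
    using assms by (simp add: scalar_prod_def lessThan_atLeast0)
  also have "\<dots> = (\<Sum>d\<in>S. X $$ (r, d) * Y $$ (d, c))"
    by (rule sum.mono_neutral_right) (use assms in auto)
  finally show ?thesis .
qed

definition shear_mat :: "nat \<Rightarrow> nat \<Rightarrow> int \<Rightarrow> int mat" where
  "shear_mat k p a = mat k k (\<lambda>(r, c). if r = c then 1 else if r = p \<and> c = Suc p then a else 0)"

lemma shear_mat_carrier [simp]: "shear_mat k p a \<in> carrier_mat k k"
  by (simp add: shear_mat_def)

lemma upper_triangular_shear_mat: "upper_triangular (shear_mat k p a)"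
  by (simp add: upper_triangular_def shear_mat_def)

lemma shear_mat_mult: "shear_mat k p a * shear_mat k p b = shear_mat k p (a + b)"
proof (rule eq_matI)
  fix r c assume "r < dim_row (shear_mat k p (a + b))" "c < dim_col (shear_mat k p (a + b))"
  then have rc: "r < k" "c < k" by (auto simp: shear_mat_def)
  show "(shear_mat k p a * shear_mat k p b) $$ (r, c) = shear_mat k p (a + b) $$ (r, c)"
  proof (cases "r = p \<and> Suc p < k")
    case True
    then have "(shear_mat k p a * shear_mat k p b) $$ (r, c) =
        (\<Sum>d\<in>{p, Suc p}. shear_mat k p a $$ (r, d) * shear_mat k p b $$ (d, c))"
      by (intro index_mult_mat_row_support[of _ k k _ k]) (use rc in \<open>auto simp: shear_mat_def\<close>)
    then show ?thesis using True rc by (auto simp: shear_mat_def)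
  next
    case False
    then have "(shear_mat k p a * shear_mat k p b) $$ (r, c) =
        (\<Sum>d\<in>{r}. shear_mat k p a $$ (r, d) * shear_mat k p b $$ (d, c))"
      by (intro index_mult_mat_row_support[of _ k k _ k]) (use rc in \<open>auto simp: shear_mat_def\<close>)
    then show ?thesis using False rc by (auto simp: shear_mat_def)
  qed
qed (simp_all add: shear_mat_def)

lemma shear_mat_pow: "shear_mat k p 1 ^\<^sub>m n = shear_mat k p (int n)"
proof (induction n)
  case 0
  show ?case by (rule eq_matI) (auto simp: shear_mat_def)
next
  case (Suc n)
  then show ?case by (simp add: shear_mat_mult add.commute)
qed

definition skip_shift_mat :: "nat \<Rightarrow> nat \<Rightarrow> int mat" where
  "skip_shift_mat k p = mat k k (\<lambda>(r, c). if c = Suc r \<and> r \<noteq> p then 1 else 0)"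

definition jump_mat :: "nat \<Rightarrow> nat \<Rightarrow> int \<Rightarrow> int mat" where
  "jump_mat k p a = mat k k (\<lambda>(r, c). if c = Suc r \<and> r \<noteq> p then 1
     else if r = p \<and> c = Suc (Suc p) then a else 0)"

lemma skip_shift_mat_carrier [simp]: "skip_shift_mat k p \<in> carrier_mat k k"
  by (simp add: skip_shift_mat_def)

lemma upper_triangular_skip_shift_mat: "upper_triangular (skip_shift_mat k p)"
  by (simp add: upper_triangular_def skip_shift_mat_def)

lemma shear_mat_mult_skip_shift_mat: "shear_mat k p a * skip_shift_mat k p = jump_mat k p a"
proof (rule eq_matI)
  fix r c assume "r < dim_row (jump_mat k p a)" "c < dim_col (jump_mat k p a)"
  then have rc: "r < k" "c < k" by (auto simp: jump_mat_def)
  show "(shear_mat k p a * skip_shift_mat k p) $$ (r, c) = jump_mat k p a $$ (r, c)"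
  proof (cases "r = p \<and> Suc p < k")
    case True
    then have "(shear_mat k p a * skip_shift_mat k p) $$ (r, c) =
        (\<Sum>d\<in>{p, Suc p}. shear_mat k p a $$ (r, d) * skip_shift_mat k p $$ (d, c))"
      by (intro index_mult_mat_row_support[of _ k k _ k]) (use rc in \<open>auto simp: shear_mat_def\<close>)
    then show ?thesis using True rc by (auto simp: shear_mat_def skip_shift_mat_def jump_mat_def)
  next
    case False
    then have "(shear_mat k p a * skip_shift_mat k p) $$ (r, c) =
        (\<Sum>d\<in>{r}. shear_mat k p a $$ (r, d) * skip_shift_mat k p $$ (d, c))"
      by (intro index_mult_mat_row_support[of _ k k _ k]) (use rc in \<open>auto simp: shear_mat_def\<close>)
    then show ?thesis using False rc by (auto simp: shear_mat_def skip_shift_mat_def jump_mat_def)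
  qed
qed (simp_all add: jump_mat_def shear_mat_def skip_shift_mat_def)

lemma word_MN_carrier:
  assumes "M \<in> carrier_mat k k" "N \<in> carrier_mat k k" "as \<noteq> []"
  shows "word_MN M N as \<in> carrier_mat k k"
  using assms by (induction M N as rule: word_MN.induct) auto

lemma index_jump_mat_mult_step:
  assumes "X \<in> carrier_mat k k" "r \<noteq> p" "Suc r < k" "c < k"
  shows "(jump_mat k p a * X) $$ (r, c) = X $$ (Suc r, c)"
proof -
  have "(jump_mat k p a * X) $$ (r, c) = (\<Sum>d\<in>{Suc r}. jump_mat k p a $$ (r, d) * X $$ (d, c))"
    by (intro index_mult_mat_row_support[of _ k k _ k]) (use assms in \<open>auto simp: jump_mat_def\<close>)
  then show ?thesis using assms by (simp add: jump_mat_def)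
qed

lemma index_jump_mat_mult_jump:
  assumes "X \<in> carrier_mat k k" "Suc (Suc p) < k" "c < k"
  shows "(jump_mat k p a * X) $$ (p, c) = a * X $$ (Suc (Suc p), c)"
proof -
  have "(jump_mat k p a * X) $$ (p, c) = (\<Sum>d\<in>{Suc (Suc p)}. jump_mat k p a $$ (p, d) * X $$ (d, c))"
    by (intro index_mult_mat_row_support[of _ k k _ k]) (use assms in \<open>auto simp: jump_mat_def\<close>)
  then show ?thesis using assms by (simp add: jump_mat_def)
qed

abbreviation shear_word :: "nat \<Rightarrow> nat \<Rightarrow> nat list \<Rightarrow> int mat" where
  "shear_word k p \<equiv> word_MN (shear_mat k p 1) (skip_shift_mat k p)"

lemmas shear_word_carrier = word_MN_carrier[OF shear_mat_carrier skip_shift_mat_carrier]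

lemma shear_word_Cons_Cons: "shear_word k p (a # b # as) = jump_mat k p (int a) * shear_word k p (b # as)"
  by (simp add: shear_mat_pow shear_mat_mult_skip_shift_mat)

lemma index_shear_word_after_jump:
  assumes "as \<noteq> []" "p < r" "r + length as = k"
  shows "shear_word k p as $$ (r, k - 1) = 1"
  using assms
proof (induction as arbitrary: r)
  case Nil
  then show ?case by simp
next
  case (Cons a as)
  show ?case
  proof (cases as)
    case Nil
    then show ?thesis using Cons.prems by (simp add: shear_mat_pow) (simp add: shear_mat_def)
  next
    case (Cons b bs)
    have "shear_word k p (a # as) $$ (r, k - 1) = shear_word k p as $$ (Suc r, k - 1)"
      unfolding \<open>as = b # bs\<close> shear_word_Cons_Cons
      by (rule index_jump_mat_mult_step) (use Cons.prems \<open>as = b # bs\<close> in \<open>auto intro: shear_word_carrier\<close>)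
    also have "\<dots> = 1"
      using Cons.IH Cons.prems \<open>as = b # bs\<close> by simp
    finally show ?thesis .
  qed
qed

lemma index_shear_word_before_jump:
  assumes "as \<noteq> []" "r \<le> p" "Suc p < k" "Suc (r + length as) = k"
  shows "shear_word k p as $$ (r, k - 1) = int (as ! (p - r))"
  using assms
proof (induction as arbitrary: r)
  case Nil
  then show ?case by simp
next
  case (Cons a as)
  show ?case
  proof (cases as)
    case Nil
    then show ?thesis using Cons.prems by (simp add: shear_mat_pow) (simp add: shear_mat_def)
  next
    case (Cons b bs)
    have W: "shear_word k p as \<in> carrier_mat k k"
      using \<open>as = b # bs\<close> by (simp add: shear_word_carrier)
    show ?thesis
    proof (cases "r = p")
      case True
      have "shear_word k p (a # as) $$ (p, k - 1) = int a * shear_word k p as $$ (Suc (Suc p), k - 1)"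
        unfolding \<open>as = b # bs\<close> shear_word_Cons_Cons
        by (rule index_jump_mat_mult_jump) (use True Cons.prems \<open>as = b # bs\<close> W in auto)
      also have "\<dots> = int a"
        using index_shear_word_after_jump[of as p "Suc (Suc p)" k] True Cons.prems \<open>as = b # bs\<close> by simp
      finally show ?thesis using True by simp
    next
      case False
      have "shear_word k p (a # as) $$ (r, k - 1) = shear_word k p as $$ (Suc r, k - 1)"
        unfolding \<open>as = b # bs\<close> shear_word_Cons_Cons
        by (rule index_jump_mat_mult_step) (use False Cons.prems \<open>as = b # bs\<close> W in auto)
      also have "\<dots> = int (as ! (p - Suc r))"
        using Cons.IH Cons.prems False \<open>as = b # bs\<close> by simp
      finally show ?thesis using False Cons.prems by (simp add: Suc_diff_Suc[symmetric])
    qed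
  qed
qed

definition diag_unit_mat :: "nat \<Rightarrow> nat \<Rightarrow> int mat" where
  "diag_unit_mat k j = mat k k (\<lambda>(r, c). if r = j \<and> c = j then 1 else 0)"

lemma diag_unit_mat_carrier [simp]: "diag_unit_mat k j \<in> carrier_mat k k"
  by (simp add: diag_unit_mat_def)

lemma upper_triangular_diag_unit_mat: "upper_triangular (diag_unit_mat k j)"
  by (simp add: upper_triangular_def diag_unit_mat_def)

lemma diag_unit_mat_mult_mult_diag_unit_mat:
  assumes W: "W \<in> carrier_mat k k"
  shows "diag_unit_mat k 0 * W * diag_unit_mat k (k - 1) = W $$ (0, k - 1) \<cdot>\<^sub>m E_mat k"
proof (rule eq_matI)
  fix r c assume "r < dim_row (W $$ (0, k - 1) \<cdot>\<^sub>m E_mat k)" "c < dim_col (W $$ (0, k - 1) \<cdot>\<^sub>m E_mat k)"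
  then have rc: "r < k" "c < k" by (auto simp: E_mat_def)
  have WB: "(W * diag_unit_mat k (k - 1)) $$ (0, c) = (if c = k - 1 then W $$ (0, k - 1) else 0)"
  proof -
    have "(W * diag_unit_mat k (k - 1)) $$ (0, c) =
        (\<Sum>d\<in>{k - 1} \<inter> {c}. W $$ (0, d) * diag_unit_mat k (k - 1) $$ (d, c))"
      by (intro index_mult_mat_col_support[OF W]) (use rc in \<open>auto simp: diag_unit_mat_def\<close>)
    then show ?thesis using rc by (auto simp: diag_unit_mat_def)
  qed
  have "(diag_unit_mat k 0 * W * diag_unit_mat k (k - 1)) $$ (r, c) =
      (diag_unit_mat k 0 * (W * diag_unit_mat k (k - 1))) $$ (r, c)"
    using W by (simp add: assoc_mult_mat[of _ k k _ k _ k])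
  also have "\<dots> = (\<Sum>d\<in>{0} \<inter> {r}. diag_unit_mat k 0 $$ (r, d) * (W * diag_unit_mat k (k - 1)) $$ (d, c))"
    by (intro index_mult_mat_row_support[of _ k k _ k]) (use W rc in \<open>auto simp: diag_unit_mat_def\<close>)
  also have "\<dots> = (W $$ (0, k - 1) \<cdot>\<^sub>m E_mat k) $$ (r, c)"
    using rc WB by (auto simp: diag_unit_mat_def E_mat_def)
  finally show "(diag_unit_mat k 0 * W * diag_unit_mat k (k - 1)) $$ (r, c) =
      (W $$ (0, k - 1) \<cdot>\<^sub>m E_mat k) $$ (r, c)" .
qed (use W in \<open>simp_all add: E_mat_def diag_unit_mat_def\<close>)

theorem lemma4p1:
  fixes t i :: nat
  assumes "t \<ge> 1" and "1 \<le> i" and "i \<le> t"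
  shows "\<exists>k \<ge> 1. \<exists>A M N B :: int mat.
           A \<in> carrier_mat k k \<and> M \<in> carrier_mat k k \<and> N \<in> carrier_mat k k \<and> B \<in> carrier_mat k k \<and>
           upper_triangular A \<and> upper_triangular M \<and> upper_triangular N \<and> upper_triangular B \<and>
           (\<forall>as :: nat list. length as = t \<longrightarrow>
              A * word_MN M N as * B = of_nat (as ! (i - 1)) \<cdot>\<^sub>m E_mat k)"
proof -
  define k p where "k = Suc t" and "p = i - 1"
  have "diag_unit_mat k 0 * shear_word k p as * diag_unit_mat k (k - 1) = of_nat (as ! (i - 1)) \<cdot>\<^sub>m E_mat k"
    if "length as = t" for as
  proof -
    have "as \<noteq> []" using that assms by auto
    then have "shear_word k p as $$ (0, k - 1) = int (as ! p)"
      using index_shear_word_before_jump[of as 0 p k] that assms by (simp add: k_def p_def)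
    then show ?thesis
      using diag_unit_mat_mult_mult_diag_unit_mat[OF shear_word_carrier[OF \<open>as \<noteq> []\<close>]] by (simp add: p_def)
  qed
  then show ?thesis
    by (intro exI[of _ k] conjI exI[of _ "diag_unit_mat k 0"] exI[of _ "shear_mat k p 1"]
        exI[of _ "skip_shift_mat k p"] exI[of _ "diag_unit_mat k (k - 1)"])
      (simp_all add: k_def upper_triangular_diag_unit_mat upper_triangular_shear_mat
        upper_triangular_skip_shift_mat)
qed

end
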